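(* Fix $0<\tau\le1$, $m>0$ and $\alpha=\frac{\tau}{2\tau+2m}$. There exist $S=S(\alpha)\ge2$ (depending also on $d$) and $\delta_0>0$ such that for every $\delta\in(0,\delta_0)$, with the integer $r$ determined by $2^{-r}\le\delta^S<2^{-r+1}$, the following holds: for every $\omega_1\in\Omega$ and every fixed cube $Q\in\mathcal{D}_1=\mathcal{D}(\omega_1)$, $$\mathbb{P}_{\omega_2}\{Q\text{ is bad}\}\le\delta^2,$$ and symmetrically $\mathbb{P}_{\omega_1}\{R\text{ is bad}\}\le\delta^2$ for every fixed $R\in\mathcal{D}_2=\mathcal{D}(\omega_2)$.
   Context: Fix a unit cube $Q_*\subset\mathbb{R}^d$. $\Omega=(-1/40,1/40]^d$ with normalized Lebesgue measure $\mathbb{P}$. For $\omega\in\Omega$, $\mathcal{D}(\omega)$ is the collection of all dyadic subcubes of $\omega+Q_*$ (obtained by repeated subdivision into $2^d$ children). $\omega_1,\omega_2\in\Omega$ are independent. The skeleton of a cube $R$ is $sk\,R=\bigcup_{i=1}^{2^d}\partial R_i$, $R_i$ the dyadic children of $R$; $\ell(\cdot)$ is side length. A cube $Q\in\mathcal{D}_1$ is bad if there is $R\in\mathcal{D}_2$ with $\ell(R)\ge2^r\ell(Q)$ and $\operatorname{dist}(Q,sk\,R)<\ell(Q)^\alpha\ell(R)^{1-\alpha}$; badness of $R\in\mathcal{D}_2$ is defined symmetrically with respect to $\mathcal{D}_1$. *)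

theory Defs
  imports "HOL-Analysis.Analysis"
begin

definition cube :: "real^'n \<Rightarrow> real \<Rightarrow> (real^'n) set" where
  "cube a s = {x. \<forall>i. a$i \<le> x$i \<and> x$i \<le> a$i + s}"

definition children :: "real^'n \<Rightarrow> real \<Rightarrow> ((real^'n) \<times> real) set" where
  "children a s = {(a + (\<chi> i. (s/2) * real (e i)), s/2) | e. \<forall>i. e i \<in> {0::nat, 1}}"

definition skel :: "real^'n \<Rightarrow> real \<Rightarrow> (real^'n) set" where
  "skel a s = (\<Union>(b,t)\<in>children a s. frontier (cube b t))"

text \<open>The dyadic system of the shifted cube \<omega> + Q_*, where Q_* = cube c 1,
  represented by (corner, side length) pairs.\<close>
definition dyadic :: "real^'n \<Rightarrow> real^'n \<Rightarrow> ((real^'n) \<times> real) set" where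
  "dyadic c \<omega> = {(c + \<omega> + (\<chi> i. real (j i) / 2^k), 1 / 2^k) | k j.
      \<forall>i. j i < (2::nat)^k}"

definition Omega :: "(real^'n) set" where
  "Omega = {\<omega>. \<forall>i. -1/40 < \<omega>$i \<and> \<omega>$i \<le> 1/40}"

definition bad :: "int \<Rightarrow> real \<Rightarrow> ((real^'n) \<times> real) set \<Rightarrow> real^'n \<Rightarrow> real \<Rightarrow> bool" where
  "bad r \<alpha> D a s \<longleftrightarrow> (\<exists>(b,t)\<in>D. t \<ge> 2 powr (real_of_int r) * s \<and>
      setdist (cube a s) (skel b t) < s powr \<alpha> * t powr (1 - \<alpha>))"

end

theory Submission
  imports Defs
begin

text \<open>
  A cube (a,s) of one dyadic system can only be bad through a cube of the other system of side
  2^-k \<ge> 2^r s whose skeleton comes within e_k = s^\<alpha> 2^(-k(1-\<alpha>)) of (a,s). That skeleton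
  lies on the hyperplanes x_i = c_i + \<omega>_i + n 2^-(k+1), so \<omega> must lie in one of
  d (2^(k+1) + 1) slabs of width s + 2 e_k, of total measure O((s 2^k)^\<alpha>). Summing this
  geometric series over the admissible k bounds the probability by O(2^(-r\<alpha>)) = O(\<delta>^(S\<alpha>)),
  which is at most \<delta>^2 for S = 3/\<alpha> and small \<delta>. Badness is an open condition on \<omega>,
  which gives measurability.
\<close>

lemma cube_eq_cbox: "cube a s = cbox a (\<chi> i. a$i + s)"
  by (auto simp: cube_def mem_box_cart)

lemma skel_eq_Union:
  "skel b t = (\<Union>e\<in>{e. \<forall>i. e i \<in> {0::nat,1}}. frontier (cube (b + (\<chi> i. (t/2) * real (e i))) (t/2)))"
  unfolding skel_def children_def by auto

lemma corner_in_skel: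
  assumes "0 < t"
  shows "b \<in> skel b t"
proof -
  have zero: "(\<lambda>_. 0) \<in> {e. \<forall>i. e i \<in> {0::nat,1}}"
    by simp
  have "b \<in> frontier (cube (b + (\<chi> i. (t/2) * real ((\<lambda>_. 0::nat) i))) (t/2))"
    using assms by (simp add: cube_eq_cbox frontier_cbox mem_box_cart)
  then show ?thesis
    unfolding skel_eq_Union by (intro UN_I[OF zero])
qed

lemma cube_translation: "cube (b + w) t = (+) w ` cube b t"
proof -
  have "cube (b + w) t = cbox (b + w) ((\<chi> i. b$i + t) + w)"
    by (auto simp: cube_def mem_box_cart algebra_simps)
  then show ?thesis
    by (simp only: cube_eq_cbox cbox_shift)
qed

lemma skel_translation: "skel (b + w) t = (+) w ` skel b t"
proof -
  have "cube (b + w + v) u = (+) w ` cube (b + v) u" for v u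
    using cube_translation[of "b + v" w u] by (simp add: add_ac)
  then show ?thesis
    unfolding skel_eq_Union by (auto simp: frontier_translation)
qed

lemma skel_coordinate_on_grid:
  assumes "y \<in> skel b t"
  obtains i and m :: nat where "m \<le> 2" "y$i = b$i + real m * (t/2)"
proof -
  from assms obtain e where e: "\<forall>i. e i \<in> {0::nat,1}"
    and "y \<in> frontier (cube (b + (\<chi> i. (t/2) * real (e i))) (t/2))"
    unfolding skel_eq_Union by auto
  moreover have "(\<chi> i. (b + (\<chi> i. (t/2) * real (e i)))$i + t/2) = b + (\<chi> i. (t/2) * real (e i + 1))"
    by (simp add: vec_eq_iff algebra_simps)
  ultimately have y: "y \<in> cbox (b + (\<chi> i. (t/2) * real (e i))) (b + (\<chi> i. (t/2) * real (e i + 1)))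
      - box (b + (\<chi> i. (t/2) * real (e i))) (b + (\<chi> i. (t/2) * real (e i + 1)))"
    by (simp add: cube_eq_cbox frontier_cbox)
  then obtain i where "\<not> (b$i + (t/2) * real (e i) < y$i \<and> y$i < b$i + (t/2) * real (e i + 1))"
    by (auto simp: mem_box_cart)
  moreover have "b$i + (t/2) * real (e i) \<le> y$i" "y$i \<le> b$i + (t/2) * real (e i + 1)"
    using y by (auto simp: mem_box_cart)
  ultimately have on_face: "y$i = b$i + real (e i) * (t/2) \<or> y$i = b$i + real (e i + 1) * (t/2)"
    by (simp only: mult.commute) linarith
  have "e i \<le> 1"
    using e[rule_format, of i] by auto
  with on_face show thesis
    using that[of "e i" i] that[of "e i + 1" i] by linarith
qed

lemma setdist_cube_skel_lt_imp_near_grid: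
  assumes "setdist (cube a s) (skel b t) < e" "0 \<le> s" "0 < t"
  obtains i and m :: nat where "m \<le> 2"
    "a$i - e < b$i + real m * (t/2)" "b$i + real m * (t/2) < a$i + s + e"
proof -
  have "a \<in> cube a s" "b \<in> skel b t"
    using assms(2,3) corner_in_skel by (auto simp: cube_def)
  then obtain x y where x: "x \<in> cube a s" and y: "y \<in> skel b t" and "dist x y < e"
    using setdist_ltE[OF assms(1)] by blast
  moreover obtain i m where "m \<le> 2" "y$i = b$i + real m * (t/2)"
    using skel_coordinate_on_grid[OF y] .
  moreover have "\<bar>x$i - y$i\<bar> \<le> dist x y"
    using component_le_norm_cart[of "x - y" i] by (simp add: dist_norm)
  moreover have "a$i \<le> x$i" "x$i \<le> a$i + s"
    using x by (auto simp: cube_def)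
  ultimately show thesis
    using that[of m i] by (simp add: abs_less_iff)
qed

lemma dyadic_side_pos: "(a, s) \<in> dyadic c \<omega> \<Longrightarrow> 0 < s"
  by (auto simp: dyadic_def)

lemma bad_dyadic_iff:
  "bad r \<alpha> (dyadic c \<omega>) a s \<longleftrightarrow> (\<exists>k j. (\<forall>i. j i < (2::nat)^k) \<and> 2 powr r * s \<le> 1/2^k \<and>
     setdist (cube a s) ((+) \<omega> ` skel (c + (\<chi> i. real (j i) / 2^k)) (1/2^k))
       < s powr \<alpha> * (1/2^k) powr (1 - \<alpha>))"
proof -
  have shift: "skel (c + \<omega> + v) t = (+) \<omega> ` skel (c + v) t" for v t
    by (metis add.assoc add.commute skel_translation)
  have "bad r \<alpha> (dyadic c \<omega>) a s \<longleftrightarrow> (\<exists>k j. (\<forall>i. j i < (2::nat)^k) \<and> 2 powr r * s \<le> 1/2^k \<and>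
     setdist (cube a s) (skel (c + \<omega> + (\<chi> i. real (j i) / 2^k)) (1/2^k))
       < s powr \<alpha> * (1/2^k) powr (1 - \<alpha>))"
    unfolding bad_def dyadic_def by blast
  then show ?thesis
    unfolding shift .
qed

lemma open_setdist_translation_lt:
  fixes A B :: "'a::real_normed_vector set"
  assumes "A \<noteq> {}" "B \<noteq> {}"
  shows "open {w. setdist A ((+) w ` B) < e}"
proof -
  have "{w. setdist A ((+) w ` B) < e} = (\<Union>x\<in>A. \<Union>y\<in>B. ball (x - y) e)"
  proof (intro set_eqI iffI)
    fix w
    assume "w \<in> {w. setdist A ((+) w ` B) < e}"
    moreover have "(+) w ` B \<noteq> {}"
      using assms(2) by simp
    ultimately obtain x z where "x \<in> A" "z \<in> (+) w ` B" "dist x z < e"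
      using setdist_ltE[OF _ assms(1)] by blast
    then obtain y where "x \<in> A" "y \<in> B" "dist x (w + y) < e"
      by blast
    moreover have "dist (x - y) w = dist x (w + y)"
      by (simp add: dist_norm algebra_simps)
    ultimately have "x \<in> A" "y \<in> B" "w \<in> ball (x - y) e"
      by auto
    then show "w \<in> (\<Union>x\<in>A. \<Union>y\<in>B. ball (x - y) e)"
      by blast
  next
    fix w
    assume "w \<in> (\<Union>x\<in>A. \<Union>y\<in>B. ball (x - y) e)"
    then obtain x y where "x \<in> A" "y \<in> B" "dist (x - y) w < e"
      by auto
    moreover have "dist (x - y) w = dist x (w + y)"
      by (simp add: dist_norm algebra_simps)
    ultimately have "x \<in> A" "y \<in> B" "dist x (w + y) < e"
      by auto
    then show "w \<in> {w. setdist A ((+) w ` B) < e}"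
      using setdist_le_dist[of x A "w + y" "(+) w ` B"] by auto
  qed
  moreover have "open (\<Union>x\<in>A. \<Union>y\<in>B. ball (x - y) e)"
    by (intro open_UN ballI open_ball)
  ultimately show ?thesis
    by simp
qed

lemma open_bad_set:
  assumes "0 < s"
  shows "open {\<omega>. bad r \<alpha> (dyadic c \<omega>) a s}"
proof -
  have "cube a s \<noteq> {}"
    using assms by (auto simp: cube_def)
  moreover have "skel b (1/2^k) \<noteq> {}" for b :: "real^'n" and k :: nat
    using corner_in_skel[of "1/2^k" b] by auto
  ultimately show ?thesis
    unfolding bad_dyadic_iff
    by (intro open_Collect_ex open_Collect_conj open_Collect_const open_setdist_translation_lt) auto
qed

definition slab :: "'n::finite \<Rightarrow> real \<Rightarrow> real \<Rightarrow> (real^'n) set" where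
  "slab i l u = {x. l < x$i \<and> x$i < u}"

lemma bad_subset_slabs:
  fixes a c :: "real^'n" and r :: int and s \<alpha> :: real
  assumes "0 < s"
  defines "\<epsilon> \<equiv> \<lambda>k::nat. s powr \<alpha> * (1/2^k) powr (1 - \<alpha>)"
  shows "{\<omega>. bad r \<alpha> (dyadic c \<omega>) a s} \<subseteq>
    (\<Union>k\<in>{k. 2 powr r * s \<le> 1/2^k}. \<Union>i. \<Union>n\<le>2^(k+1).
      slab i (a$i - c$i - real n / 2^(k+1) - \<epsilon> k) (a$i - c$i - real n / 2^(k+1) - \<epsilon> k + (s + 2 * \<epsilon> k)))"
proof
  fix \<omega>
  assume "\<omega> \<in> {\<omega>. bad r \<alpha> (dyadic c \<omega>) a s}"
  then obtain k j where j: "\<forall>i. j i < (2::nat)^k" and k: "2 powr r * s \<le> 1/2^k"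
    and near: "setdist (cube a s) (skel (c + \<omega> + (\<chi> i. real (j i) / 2^k)) (1/2^k))
      < s powr \<alpha> * (1/2^k) powr (1 - \<alpha>)"
    unfolding bad_def dyadic_def by blast
  define b where "b = c + \<omega> + (\<chi> i. real (j i) / 2^k)"
  define t :: real where "t = 1/2^k"
  have "setdist (cube a s) (skel b t) < \<epsilon> k"
    using near unfolding b_def t_def \<epsilon>_def .
  then obtain i m where m: "m \<le> 2"
    and "a$i - \<epsilon> k < b$i + real m * (t/2)" "b$i + real m * (t/2) < a$i + s + \<epsilon> k"
    by (rule setdist_cube_skel_lt_imp_near_grid) (use assms in \<open>simp_all add: t_def\<close>)
  moreover have "b$i + real m * (t/2) = c$i + \<omega>$i + real (2 * j i + m) / 2^(k+1)"
    by (simp add: b_def t_def field_simps)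
  moreover have "2 * j i + m \<le> 2^(k+1)"
    using j[rule_format, of i] m by simp
  ultimately show "\<omega> \<in> (\<Union>k\<in>{k. 2 powr r * s \<le> 1/2^k}. \<Union>i. \<Union>n\<le>2^(k+1).
      slab i (a$i - c$i - real n / 2^(k+1) - \<epsilon> k) (a$i - c$i - real n / 2^(k+1) - \<epsilon> k + (s + 2 * \<epsilon> k)))"
    using k unfolding slab_def by (intro UN_I[of k] UN_I[of i] UN_I[of "2 * j i + m"]) auto
qed

lemma sets_lebesgue_open: "open S \<Longrightarrow> S \<in> sets lebesgue"
  using lebesgue_openin[of UNIV S] by simp

lemma sets_lebesgue_closed: "closed S \<Longrightarrow> S \<in> sets lebesgue"
  using lebesgue_closedin[of UNIV S] by simp

lemma Omega_sets_lebesgue: "(Omega :: (real^'n) set) \<in> sets lebesgue"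
proof -
  have Omega_eq: "Omega = (\<Inter>i. {x::real^'n. -1/40 < x$i} \<inter> {x. x$i \<le> 1/40})"
    by (auto simp: Omega_def)
  have "{x::real^'n. -1/40 < x$i} \<in> sets lebesgue" "{x::real^'n. x$i \<le> 1/40} \<in> sets lebesgue"
    for i :: 'n
    by (intro sets_lebesgue_open sets_lebesgue_closed open_Collect_less closed_Collect_le continuous_intros)+
  then show ?thesis
    unfolding Omega_eq by (intro sets.finite_INT) auto
qed

lemma measure_lebesgue_cbox_cart:
  assumes "\<And>i. a$i \<le> b$i"
  shows "measure lebesgue (cbox a b) = (\<Prod>i\<in>UNIV. b$i - a$i)"
proof -
  have "cbox a b \<noteq> {}"
    using assms by (auto simp: interval_eq_empty_cart not_less)
  then show ?thesis
    by (metis cbox_borel content_cbox_cart measure_completion sets_lborel)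
qed

lemma Omega_subset_cbox: "Omega \<subseteq> cbox (\<chi> _. -1/40) (\<chi> _. 1/40)"
  by (auto simp: Omega_def mem_box_cart less_imp_le)

lemma Omega_lmeasurable: "(Omega :: (real^'n) set) \<in> lmeasurable"
  by (rule fmeasurableI2[OF lmeasurable_cbox Omega_subset_cbox Omega_sets_lebesgue])

lemma measure_Omega_ge: "(1/40)^CARD('n) \<le> measure lebesgue (Omega :: (real^'n) set)"
proof -
  have "cbox (0::real^'n) (\<chi> _. 1/40) \<subseteq> Omega"
    by (auto simp: Omega_def mem_box_cart intro: less_le_trans[of _ 0])
  then have "measure lebesgue (cbox (0::real^'n) (\<chi> _. 1/40)) \<le> measure lebesgue (Omega :: (real^'n) set)"
    by (intro measure_mono_fmeasurable Omega_lmeasurable) auto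
  moreover have "measure lebesgue (cbox (0::real^'n) (\<chi> _. 1/40)) = (1/40)^CARD('n)"
    by (subst measure_lebesgue_cbox_cart) auto
  ultimately show ?thesis
    by simp
qed

lemma Omega_Int_slab_sets_lebesgue: "Omega \<inter> slab i l u \<in> sets lebesgue"
  unfolding slab_def
  by (intro sets.Int Omega_sets_lebesgue sets_lebesgue_open open_Collect_conj open_Collect_less continuous_intros)

lemma measure_Omega_Int_slab_le:
  fixes i :: "'n::finite"
  assumes "l \<le> u"
  shows "measure lebesgue (Omega \<inter> slab i l u) \<le> (u - l) * (1/20)^(CARD('n) - 1)"
proof -
  define L :: "real^'n" where "L = (\<chi> j. if j = i then l else -1/40)"
  define U :: "real^'n" where "U = (\<chi> j. if j = i then u else 1/40)"
  have "Omega \<inter> slab i l u \<subseteq> cbox L U"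
    by (auto simp: Omega_def slab_def mem_box_cart L_def U_def less_imp_le)
  then have "measure lebesgue (Omega \<inter> slab i l u) \<le> measure lebesgue (cbox L U)"
    by (intro measure_mono_fmeasurable Omega_Int_slab_sets_lebesgue) auto
  also have "\<dots> = (\<Prod>j\<in>UNIV. U$j - L$j)"
    using assms by (intro measure_lebesgue_cbox_cart) (simp add: L_def U_def)
  also have "\<dots> = (U$i - L$i) * (\<Prod>j\<in>UNIV - {i}. U$j - L$j)"
    by (rule prod.remove) auto
  also have "\<dots> = (u - l) * (1/20)^(CARD('n) - 1)"
    by (simp add: L_def U_def card_Diff_singleton)
  finally show ?thesis .
qed

lemma sum_powr_doubling_le:
  fixes x \<alpha> :: real
  assumes "0 < x" "0 < \<alpha>"
  shows "(\<Sum>k\<le>N. (x * 2^k) powr \<alpha>) \<le> (x * 2^N) powr \<alpha> / (1 - 2 powr -\<alpha>)"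
proof (induction N)
  case 0
  have "0 < 1 - 2 powr -\<alpha>" "1 - 2 powr -\<alpha> \<le> 1"
    using powr_less_one[of 2 "-\<alpha>"] assms(2) by auto
  then show ?case
    by (simp add: le_divide_eq mult_left_le)
next
  case (Suc N)
  have q: "1 - 2 powr -\<alpha> \<noteq> 0"
    using powr_less_one[of 2 "-\<alpha>"] assms(2) by simp
  have halving: "(x * 2^N) powr \<alpha> = 2 powr -\<alpha> * (x * 2^Suc N) powr \<alpha>"
    using assms(1) by (simp add: powr_mult powr_minus field_simps)
  have "(\<Sum>k\<le>Suc N. (x * 2^k) powr \<alpha>) \<le> (x * 2^N) powr \<alpha> / (1 - 2 powr -\<alpha>) + (x * 2^Suc N) powr \<alpha>"
    using Suc.IH by simp
  also have "\<dots> = (x * 2^Suc N) powr \<alpha> / (1 - 2 powr -\<alpha>)"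
    unfolding halving using q by (simp add: field_simps)
  finally show ?case .
qed

lemma powr_mult_le_inverse_power_iff:
  fixes r s :: real
  shows "2 powr r * s \<le> 1/2^k \<longleftrightarrow> s * 2^k \<le> 2 powr -r"
  by (simp add: powr_minus_divide le_divide_eq field_simps)

lemma sum_admissible_scales_le:
  fixes s \<alpha> :: real
  assumes "0 < s" "0 < \<alpha>"
  shows "finite {k::nat. 2 powr r * s \<le> 1/2^k}"
    and "(\<Sum>k | 2 powr r * s \<le> 1/2^k. (s * 2^k) powr \<alpha>) \<le> (2 powr -r) powr \<alpha> / (1 - 2 powr -\<alpha>)"
proof -
  define K where "K = {k::nat. s * 2^k \<le> 2 powr -r}"
  have K_eq: "{k::nat. 2 powr r * s \<le> 1/2^k} = K"
    unfolding K_def powr_mult_le_inverse_power_iff ..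
  obtain M where M: "2 powr -r / s < 2^M"
    using real_arch_pow[of 2 "2 powr -r / s"] by auto
  have "K \<subseteq> {..<M}"
  proof
    fix k
    assume "k \<in> K"
    then have "(2::real)^k \<le> 2 powr -r / s"
      using assms(1) by (simp add: K_def le_divide_eq mult.commute)
    then have "(2::real)^k < 2^M"
      using M by linarith
    then show "k \<in> {..<M}"
      by simp
  qed
  then show "finite {k::nat. 2 powr r * s \<le> 1/2^k}"
    unfolding K_eq by (rule finite_subset) simp
  then have "finite K"
    unfolding K_eq .
  have q: "0 < 1 - 2 powr -\<alpha>"
    using powr_less_one[of 2 "-\<alpha>"] assms(2) by simp
  have "(\<Sum>k\<in>K. (s * 2^k) powr \<alpha>) \<le> (2 powr -r) powr \<alpha> / (1 - 2 powr -\<alpha>)"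
  proof (cases "K = {}")
    case True
    with q show ?thesis
      by simp
  next
    case False
    define N where "N = Max K"
    have "N \<in> K"
      unfolding N_def using \<open>finite K\<close> False by (rule Max_in)
    then have "K = {..N}"
      using \<open>finite K\<close> assms(1) by (auto simp: N_def K_def intro: order_trans[rotated])
    then have "(\<Sum>k\<in>K. (s * 2^k) powr \<alpha>) \<le> (s * 2^N) powr \<alpha> / (1 - 2 powr -\<alpha>)"
      using sum_powr_doubling_le[OF assms] by simp
    also have "\<dots> \<le> (2 powr -r) powr \<alpha> / (1 - 2 powr -\<alpha>)"
      using \<open>N \<in> K\<close> assms q by (intro divide_right_mono powr_mono2) (auto simp: K_def)
    finally show ?thesis .
  qed
  then show "(\<Sum>k | 2 powr r * s \<le> 1/2^k. (s * 2^k) powr \<alpha>) \<le> (2 powr -r) powr \<alpha> / (1 - 2 powr -\<alpha>)"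
    unfolding K_eq .
qed

lemma powr_mult_powr_one_minus:
  fixes s T \<alpha> :: real
  assumes "0 < s" "0 < T"
  shows "s powr \<alpha> * T powr (1 - \<alpha>) = (s / T) powr \<alpha> * T"
  using assms by (simp add: powr_divide powr_diff)

lemma scale_contribution_le:
  fixes s \<alpha> :: real
  assumes "0 < s" "0 < \<alpha>" "\<alpha> \<le> 1" "s * 2^k \<le> 1"
  shows "(2^(k+1) + 1) * (s + 2 * (s powr \<alpha> * (1/2^k) powr (1 - \<alpha>))) \<le> 9 * (s * 2^k) powr \<alpha>"
proof -
  define x where "x = s * 2^k"
  have "0 < x"
    using assms(1) by (simp add: x_def)
  have eps: "s powr \<alpha> * (1/2^k) powr (1 - \<alpha>) = x powr \<alpha> / 2^k"
    using powr_mult_powr_one_minus[of s "1/2^k" \<alpha>] assms(1) by (simp add: x_def)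
  have "x \<le> x powr \<alpha>"
    using powr_mono'[of \<alpha> 1 x] assms(2-4) \<open>0 < x\<close> by (simp add: x_def)
  have "(2^(k+1) + 1) * (s + 2 * (x powr \<alpha> / 2^k)) \<le> (3 * 2^k) * (s + 2 * (x powr \<alpha> / 2^k))"
    using assms(1) by (intro mult_right_mono) auto
  also have "\<dots> = 3 * (x + 2 * x powr \<alpha>)"
    by (simp add: x_def field_simps)
  also have "\<dots> \<le> 9 * x powr \<alpha>"
    using \<open>x \<le> x powr \<alpha>\<close> by simp
  finally show ?thesis
    unfolding eps x_def .
qed

lemma measure_Omega_Int_slabs_le:
  fixes l :: "'n::finite \<Rightarrow> nat \<Rightarrow> real"
  assumes "0 \<le> w"
  shows "measure lebesgue (\<Union>i. \<Union>n\<le>N. Omega \<inter> slab i (l i n) (l i n + w))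
    \<le> CARD('n) * (real (N + 1) * w * (1/20)^(CARD('n) - 1))"
proof -
  have "measure lebesgue (\<Union>i. \<Union>n\<le>N. Omega \<inter> slab i (l i n) (l i n + w))
      \<le> (\<Sum>i\<in>UNIV. measure lebesgue (\<Union>n\<le>N. Omega \<inter> slab (i::'n) (l i n) (l i n + w)))"
    by (intro measure_UNION_le sets.finite_UN Omega_Int_slab_sets_lebesgue) auto
  also have "\<dots> \<le> (\<Sum>i\<in>UNIV. \<Sum>n\<le>N. measure lebesgue (Omega \<inter> slab i (l i n) (l i n + w)))"
    by (intro sum_mono measure_UNION_le Omega_Int_slab_sets_lebesgue) auto
  also have "\<dots> \<le> (\<Sum>i\<in>(UNIV::'n set). \<Sum>n\<le>N. w * (1/20)^(CARD('n) - 1))"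
    using assms by (intro sum_mono measure_Omega_Int_slab_le[THEN order_trans]) simp_all
  also have "\<dots> = CARD('n) * (real (N + 1) * w * (1/20)^(CARD('n) - 1))"
    by simp
  finally show ?thesis .
qed

lemma bad_set_sets_lebesgue:
  assumes "0 < s"
  shows "{\<omega>\<in>Omega. bad r \<alpha> (dyadic c \<omega>) a s} \<in> sets lebesgue"
proof -
  have "{\<omega>\<in>Omega. bad r \<alpha> (dyadic c \<omega>) a s} = Omega \<inter> {\<omega>. bad r \<alpha> (dyadic c \<omega>) a s}"
    by blast
  also have "\<dots> \<in> sets lebesgue"
    by (intro sets.Int Omega_sets_lebesgue sets_lebesgue_open open_bad_set assms)
  finally show ?thesis .
qed

lemma measure_bad_set_le:
  fixes a c :: "real^'n" and r :: int and s \<alpha> :: real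
  assumes "0 < s" "0 < \<alpha>" "\<alpha> \<le> 1" "0 \<le> r"
  shows "measure lebesgue {\<omega>\<in>Omega. bad r \<alpha> (dyadic c \<omega>) a s}
    \<le> CARD('n) * (1/20)^(CARD('n) - 1) * 9 * ((2 powr - real_of_int r) powr \<alpha> / (1 - 2 powr -\<alpha>))"
proof -
  define \<epsilon> where "\<epsilon> = (\<lambda>k::nat. s powr \<alpha> * (1/2^k) powr (1 - \<alpha>))"
  define K where "K = {k::nat. 2 powr r * s \<le> 1/2^k}"
  define U where "U = (\<lambda>k. \<Union>i. \<Union>n\<le>2^(k+1).
    Omega \<inter> slab i (a$i - c$i - real n / 2^(k+1) - \<epsilon> k) (a$i - c$i - real n / 2^(k+1) - \<epsilon> k + (s + 2 * \<epsilon> k)))"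
  define C where "C = real CARD('n) * (1/20)^(CARD('n) - 1)"
  have "finite K"
    unfolding K_def using sum_admissible_scales_le(1)[OF assms(1,2)] .
  have U_sets: "U k \<in> sets lebesgue" for k
    unfolding U_def by (intro sets.countable_UN' sets.finite_UN Omega_Int_slab_sets_lebesgue) auto
  have "{\<omega>\<in>Omega. bad r \<alpha> (dyadic c \<omega>) a s} \<subseteq> (\<Union>k\<in>K. U k)"
    using bad_subset_slabs[OF assms(1), of r \<alpha> c a] by (auto simp: U_def K_def \<epsilon>_def)
  moreover have "(\<Union>k\<in>K. U k) \<subseteq> Omega"
    by (auto simp: U_def)
  then have "(\<Union>k\<in>K. U k) \<in> lmeasurable"
    using \<open>finite K\<close> U_sets by (intro fmeasurableI2[OF Omega_lmeasurable] sets.finite_UN) auto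
  ultimately have "measure lebesgue {\<omega>\<in>Omega. bad r \<alpha> (dyadic c \<omega>) a s} \<le> measure lebesgue (\<Union>k\<in>K. U k)"
    by (intro measure_mono_fmeasurable bad_set_sets_lebesgue assms(1))
  also have "\<dots> \<le> (\<Sum>k\<in>K. measure lebesgue (U k))"
    using \<open>finite K\<close> U_sets by (intro measure_UNION_le)
  also have "\<dots> \<le> (\<Sum>k\<in>K. C * (9 * (s * 2^k) powr \<alpha>))"
  proof (intro sum_mono)
    fix k
    assume "k \<in> K"
    then have "s * 2^k \<le> 2 powr - real_of_int r"
      by (simp add: K_def powr_mult_le_inverse_power_iff)
    also have "\<dots> \<le> 2 powr 0"
      using assms(4) by (intro powr_mono) auto
    finally have "s * 2^k \<le> 1"
      by simp
    have "measure lebesgue (U k) \<le> CARD('n) * (real (2^(k+1) + 1) * (s + 2 * \<epsilon> k) * (1/20)^(CARD('n) - 1))"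
      unfolding U_def by (rule measure_Omega_Int_slabs_le) (use assms(1) in \<open>simp add: \<epsilon>_def\<close>)
    also have "\<dots> = C * (real (2^(k+1) + 1) * (s + 2 * \<epsilon> k))"
      by (simp add: C_def)
    also have "\<dots> \<le> C * (9 * (s * 2^k) powr \<alpha>)"
      using scale_contribution_le[OF assms(1-3) \<open>s * 2^k \<le> 1\<close>] by (intro mult_left_mono) (simp_all add: \<epsilon>_def C_def add.commute)
    finally show "measure lebesgue (U k) \<le> C * (9 * (s * 2^k) powr \<alpha>)" .
  qed
  also have "\<dots> = C * 9 * (\<Sum>k\<in>K. (s * 2^k) powr \<alpha>)"
    by (simp add: sum_distrib_left mult_ac)
  also have "\<dots> \<le> C * 9 * ((2 powr - real_of_int r) powr \<alpha> / (1 - 2 powr -\<alpha>))"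
    using sum_admissible_scales_le(2)[OF assms(1,2)] by (intro mult_left_mono) (simp_all add: K_def C_def)
  finally show ?thesis
    unfolding C_def .
qed

lemma dyadic_scale_bounds:
  fixes \<delta> \<alpha> :: real and r :: int
  assumes "0 < \<delta>" "\<delta> < 1" "0 < \<alpha>" "2 powr - real_of_int r \<le> \<delta> powr (3/\<alpha>)"
  shows "0 \<le> r" and "(2 powr - real_of_int r) powr \<alpha> \<le> \<delta>^3"
proof -
  have "\<delta> powr (3/\<alpha>) < 1"
    using powr_less_mono2[of "3/\<alpha>" \<delta> 1] assms(1-3) by simp
  then have "2 powr - real_of_int r < 2 powr 0"
    using assms(4) by simp
  then show "0 \<le> r"
    using powr_less_cancel_iff[of 2 "- real_of_int r" 0] by simp
  have "(2 powr - real_of_int r) powr \<alpha> \<le> (\<delta> powr (3/\<alpha>)) powr \<alpha>"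
    using assms(3,4) by (intro powr_mono2) auto
  also have "\<dots> = \<delta>^3"
    using assms(1,3) by (simp add: powr_powr powr_realpow)
  finally show "(2 powr - real_of_int r) powr \<alpha> \<le> \<delta>^3" .
qed

lemma probability_bad_le:
  fixes a c :: "real^'n" and r :: int and s \<alpha> \<delta> :: real
  defines "C \<equiv> CARD('n) * (1/20)^(CARD('n) - 1) * 9 / (1 - 2 powr -\<alpha>) * 40^CARD('n)"
  assumes "0 < s" "0 < \<alpha>" "\<alpha> \<le> 1"
    and "0 < \<delta>" "\<delta> < 1" "\<delta> * C \<le> 1" "2 powr - real_of_int r \<le> \<delta> powr (3/\<alpha>)"
  shows "measure lebesgue {\<omega>\<in>Omega. bad r \<alpha> (dyadic c \<omega>) a s} / measure lebesgue (Omega :: (real^'n) set) \<le> \<delta>^2"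
proof -
  note scale = dyadic_scale_bounds[OF assms(5,6,3,8)]
  have "0 \<le> C"
    using powr_less_one[of 2 "-\<alpha>"] assms(3) by (simp add: C_def)
  have "0 < (1/40::real)^CARD('n)"
    by simp
  moreover from this have "0 < measure lebesgue (Omega :: (real^'n) set)"
    using measure_Omega_ge by (rule less_le_trans)
  ultimately have "measure lebesgue {\<omega>\<in>Omega. bad r \<alpha> (dyadic c \<omega>) a s} / measure lebesgue (Omega :: (real^'n) set)
      \<le> measure lebesgue {\<omega>\<in>Omega. bad r \<alpha> (dyadic c \<omega>) a s} / (1/40)^CARD('n)"
    using measure_Omega_ge by (intro divide_left_mono mult_pos_pos) auto
  also have "\<dots> = measure lebesgue {\<omega>\<in>Omega. bad r \<alpha> (dyadic c \<omega>) a s} * 40^CARD('n)"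
    by (simp add: power_one_over)
  also have "\<dots> \<le> CARD('n) * (1/20)^(CARD('n) - 1) * 9 * ((2 powr - real_of_int r) powr \<alpha> / (1 - 2 powr -\<alpha>))
      * 40^CARD('n)"
    by (intro mult_right_mono measure_bad_set_le assms(2-4) scale(1)) simp
  also have "\<dots> = C * (2 powr - real_of_int r) powr \<alpha>"
    by (simp add: C_def)
  also have "\<dots> \<le> C * \<delta>^3"
    using scale(2) \<open>0 \<le> C\<close> by (rule mult_left_mono)
  also have "\<dots> = (\<delta> * C) * \<delta>^2"
    by (simp add: power3_eq_cube power2_eq_square)
  also have "\<dots> \<le> \<delta>^2"
    using assms(5,7) \<open>0 \<le> C\<close> by (intro mult_left_le_one_le) auto
  finally show ?thesis .
qed

theorem theorem15:
  fixes c :: "real^'n" and \<tau> m :: real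
  assumes "0 < \<tau>" "\<tau> \<le> 1" "0 < m"
  defines "\<alpha> \<equiv> \<tau> / (2 * \<tau> + 2 * m)"
  shows "\<exists>S \<ge> 2. \<exists>\<delta>0 > 0. \<forall>\<delta>. 0 < \<delta> \<and> \<delta> < \<delta>0 \<longrightarrow>
    (\<forall>r::int. 2 powr (- real_of_int r) \<le> \<delta> powr S \<and> \<delta> powr S < 2 powr (- real_of_int r + 1) \<longrightarrow>
      (\<forall>\<omega>1 \<in> Omega. \<forall>(a,s) \<in> dyadic c \<omega>1.
         {\<omega>2 \<in> Omega. bad r \<alpha> (dyadic c \<omega>2) a s} \<in> sets lebesgue \<and>
         measure lebesgue {\<omega>2 \<in> Omega. bad r \<alpha> (dyadic c \<omega>2) a s}
           / measure lebesgue (Omega :: (real^'n) set) \<le> \<delta>^2) \<and>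
      (\<forall>\<omega>2 \<in> Omega. \<forall>(b,t) \<in> dyadic c \<omega>2.
         {\<omega>1 \<in> Omega. bad r \<alpha> (dyadic c \<omega>1) b t} \<in> sets lebesgue \<and>
         measure lebesgue {\<omega>1 \<in> Omega. bad r \<alpha> (dyadic c \<omega>1) b t}
           / measure lebesgue (Omega :: (real^'n) set) \<le> \<delta>^2))"
proof -
  \<comment> \<open>S = 3/\<alpha> turns 2^-r \<le> \<delta>^S into (2^-r)^\<alpha> \<le> \<delta>^3, and one factor \<delta> absorbs the
    constant C.\<close>
  have "0 < \<alpha>" "\<alpha> \<le> 1/2"
    using assms by (auto simp: \<alpha>_def divide_le_eq)
  define C where "C = CARD('n) * (1/20)^(CARD('n) - 1) * 9 / (1 - 2 powr -\<alpha>) * 40^CARD('n)"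
  have "0 < C"
    using powr_less_one[of 2 "-\<alpha>"] \<open>0 < \<alpha>\<close> by (simp add: C_def)
  have "2 \<le> 3/\<alpha>"
    using \<open>0 < \<alpha>\<close> \<open>\<alpha> \<le> 1/2\<close> by (simp add: le_divide_eq)
  moreover have "0 < min 1 (1/C)"
    using \<open>0 < C\<close> by simp
  moreover have "measure lebesgue {\<omega>\<in>Omega. bad r \<alpha> (dyadic c \<omega>) a s} / measure lebesgue (Omega :: (real^'n) set) \<le> \<delta>^2"
    if "(a, s) \<in> dyadic c \<omega>'" "0 < \<delta>" "\<delta> < min 1 (1/C)" "2 powr - real_of_int r \<le> \<delta> powr (3/\<alpha>)"
    for a s \<omega>' \<delta> r
  proof (rule probability_bad_le[where \<alpha> = \<alpha> and c = c, folded C_def])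
    show "0 < s"
      using that(1) by (rule dyadic_side_pos)
    show "\<delta> * C \<le> 1"
      using that(3) \<open>0 < C\<close> by (simp add: less_divide_eq mult.commute)
  qed (use that \<open>0 < \<alpha>\<close> \<open>\<alpha> \<le> 1/2\<close> in auto)
  moreover have "{\<omega>\<in>Omega. bad r \<alpha> (dyadic c \<omega>) a s} \<in> sets lebesgue" if "(a, s) \<in> dyadic c \<omega>'" for a s \<omega>' r
    using that by (intro bad_set_sets_lebesgue dyadic_side_pos)
  ultimately show ?thesis
    by blast
qed

end
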